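(* Let $\Gamma=(G,\sigma)$ be a signed graph with vertex measure $\mu$, edge weight $w$ and potential $\kappa$, and let $\lambda_k^{(p)}$ be the $k$-th variational eigenvalue of its $p$-Laplacian. Let $\eta_k^{(p)}$ be the $k$-th variational eigenvalue of the $p$-Laplacian of $(G,\sigma)$ with the same $w$ and $\mu$ but with potential $\kappa'\equiv 0$. Then for every $p\ge 1$ and $1\le k\le n$, $$\eta_k^{(p)}-\mathcal C\le\lambda_k^{(p)}\le\eta_k^{(p)}+\mathcal C,\qquad \mathcal C:=\max_{1\le i\le n}\left|\frac{\kappa_i}{\mu_i}\right|.$$
   Context: $G=(V,E)$ is a finite undirected graph without self-loops, $V=\{1,\dots,n\}$. A signed graph $\Gamma=(G,\sigma)$ has signature $\sigma:E\to\{\pm1\}$, $\sigma_{ij}=\sigma(\{i,j\})$, edge weight $w:E\to(0,\infty)$, vertex measure $\mu:V\to(0,\infty)$, potential $\kappa:V\to\mathbb R$. For $p\ge1$ and nonzero $f:V\to\mathbb R$, $\mathcal R_p^\sigma(f)=\frac{\sum_{\{i,j\}\in E}w_{ij}|f(i)-\sigma_{ij}f(j)|^p+\sum_i\kappa_i|f(i)|^p}{\sum_i\mu_i|f(i)|^p}$; $\mathcal S_p=\{f:\sum_i\mu_i|f(i)|^p=1\}$. For a closed symmetric set $B\subset\mathbb R^n\setminus\{0\}$, the Krasnoselskii genus $\gamma(B)$ is the least $k$ such that an odd continuous map $B\to\mathbb R^k\setminus\{0\}$ exists. $\mathcal F_k(\mathcal S_p)$ = closed symmetric $B\subset\mathcal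 S_p$ with $\gamma(B)\ge k$. The $k$-th variational eigenvalue is $\lambda_k^{(p)}=\min_{B\in\mathcal F_k(\mathcal S_p)}\max_{f\in B}\mathcal R_p^\sigma(f)$. *)

theory Defs
  imports "HOL-Analysis.Analysis"
begin

text \<open>Vertices are the elements of a finite type 'n (so V = UNIV, n = CARD('n));
 functions f : V -> R are vectors in real^'n. The graph is given by a set E of
 2-element vertex sets (undirected, no loops).\<close>

definition edge_energy ::
  "'n::finite set set \<Rightarrow> ('n set \<Rightarrow> real) \<Rightarrow> ('n set \<Rightarrow> real) \<Rightarrow> real \<Rightarrow> real^'n \<Rightarrow> real" where
  "edge_energy E w \<sigma> p f =
     (\<Sum>e\<in>E. w e * (SOME t. \<exists>i j. e = {i, j} \<and> i \<noteq> j \<and> t = \<bar>f$i - \<sigma> e * f$j\<bar> powr p))"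

definition p_norm_mu :: "('n::finite \<Rightarrow> real) \<Rightarrow> real \<Rightarrow> real^'n \<Rightarrow> real" where
  "p_norm_mu \<mu> p f = (\<Sum>i\<in>UNIV. \<mu> i * \<bar>f$i\<bar> powr p)"

definition rayleigh ::
  "'n::finite set set \<Rightarrow> ('n set \<Rightarrow> real) \<Rightarrow> ('n set \<Rightarrow> real) \<Rightarrow> ('n \<Rightarrow> real) \<Rightarrow> ('n \<Rightarrow> real)
     \<Rightarrow> real \<Rightarrow> real^'n \<Rightarrow> real" where
  "rayleigh E w \<sigma> \<kappa> \<mu> p f =
     (edge_energy E w \<sigma> p f + (\<Sum>i\<in>UNIV. \<kappa> i * \<bar>f$i\<bar> powr p)) / p_norm_mu \<mu> p f"

definition p_sphere :: "('n::finite \<Rightarrow> real) \<Rightarrow> real \<Rightarrow> (real^'n) set" where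
  "p_sphere \<mu> p = {f. p_norm_mu \<mu> p f = 1}"

text \<open>An odd continuous map B -> R^k \ {0}, written componentwise as k real functions.\<close>
definition odd_map_exists :: "(real^'n::finite) set \<Rightarrow> nat \<Rightarrow> bool" where
  "odd_map_exists B k \<longleftrightarrow> (\<exists>g :: nat \<Rightarrow> real^'n \<Rightarrow> real.
      (\<forall>i<k. continuous_on B (g i) \<and> (\<forall>x\<in>B. g i (- x) = - g i x)) \<and>
      (\<forall>x\<in>B. \<exists>i<k. g i x \<noteq> 0))"

text \<open>Krasnoselskii genus (infinite if no such map exists).\<close>
definition kr_genus :: "(real^'n::finite) set \<Rightarrow> enat" where
  "kr_genus B = (INF k\<in>{k. odd_map_exists B k}. enat k)"

definition symmetric_set :: "(real^'n::finite) set \<Rightarrow> bool" where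
  "symmetric_set B \<longleftrightarrow> (\<forall>x\<in>B. - x \<in> B)"

definition genus_family :: "('n::finite \<Rightarrow> real) \<Rightarrow> real \<Rightarrow> nat \<Rightarrow> (real^'n) set set" where
  "genus_family \<mu> p k = {B. B \<subseteq> p_sphere \<mu> p \<and> closed B \<and> symmetric_set B \<and> kr_genus B \<ge> enat k}"

definition var_eigenvalue ::
  "'n::finite set set \<Rightarrow> ('n set \<Rightarrow> real) \<Rightarrow> ('n set \<Rightarrow> real) \<Rightarrow> ('n \<Rightarrow> real) \<Rightarrow> ('n \<Rightarrow> real)
     \<Rightarrow> real \<Rightarrow> nat \<Rightarrow> real" where
  "var_eigenvalue E w \<sigma> \<kappa> \<mu> p k =
     (INF B\<in>genus_family \<mu> p k. SUP f\<in>B. rayleigh E w \<sigma> \<kappa> \<mu> p f)"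

end

theory Submission
  imports Defs
begin

text \<open>On the \<mu>-unit sphere the potential contributes \<open>\<Sum>i. \<kappa> i * \<bar>f i\<bar>^p\<close>, which is at most
  \<open>C = max\<^sub>i \<bar>\<kappa> i / \<mu> i\<bar>\<close> in absolute value, so the two Rayleigh quotients differ by at most \<open>C\<close>
  uniformly. A uniform perturbation of a function by at most \<open>C\<close> moves each supremum, and
  then each infimum of suprema, by at most \<open>C\<close>; the edge energy being bounded on the
  sphere makes these suprema and infima finite.\<close>

lemma abs_cSUP_diff_le:
  fixes f g :: "'a \<Rightarrow> real"
  assumes bdd: "bdd_above (g ` A)" and close: "\<forall>x\<in>A. \<bar>f x - g x\<bar> \<le> C" and "0 \<le> C"
  shows "\<bar>(SUP x\<in>A. f x) - (SUP x\<in>A. g x)\<bar> \<le> C"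
proof (cases "A = {}")
  case True
  then show ?thesis using \<open>0 \<le> C\<close> by simp
next
  case False
  obtain b where b: "\<forall>x\<in>A. g x \<le> b" using bdd by (auto simp: bdd_above_def)
  have bdd_f: "bdd_above (f ` A)"
    using b close by (intro bdd_aboveI[of _ "b + C"]) force
  have "(SUP x\<in>A. f x) \<le> (SUP x\<in>A. g x) + C"
  proof (rule cSUP_least[OF False])
    show "f x \<le> (SUP x\<in>A. g x) + C" if "x \<in> A" for x
      using cSUP_upper[OF that bdd] close that by force
  qed
  moreover have "(SUP x\<in>A. g x) \<le> (SUP x\<in>A. f x) + C"
  proof (rule cSUP_least[OF False])
    show "g x \<le> (SUP x\<in>A. f x) + C" if "x \<in> A" for x
      using cSUP_upper[OF that bdd_f] close that by force
  qed
  ultimately show ?thesis by linarith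
qed

lemma abs_cINF_diff_le:
  fixes f g :: "'a \<Rightarrow> real"
  assumes "bdd_below (g ` A)" and "\<forall>x\<in>A. \<bar>f x - g x\<bar> \<le> C" and "0 \<le> C"
  shows "\<bar>(INF x\<in>A. f x) - (INF x\<in>A. g x)\<bar> \<le> C"
proof -
  have INF_eq: "(INF x\<in>A. h x) = - (SUP x\<in>A. - h x)" for h :: "'a \<Rightarrow> real"
    by (simp add: Inf_real_def image_image)
  obtain m where "\<forall>x\<in>A. m \<le> g x" using assms(1) by (auto simp: bdd_below_def)
  then have "bdd_above ((\<lambda>x. - g x) ` A)" by (intro bdd_aboveI[of _ "- m"]) auto
  moreover have "\<forall>x\<in>A. \<bar>- f x - - g x\<bar> \<le> C" using assms(2) by auto
  ultimately have "\<bar>(SUP x\<in>A. - f x) - (SUP x\<in>A. - g x)\<bar> \<le> C"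
    using \<open>0 \<le> C\<close> by (rule abs_cSUP_diff_le)
  then show ?thesis unfolding INF_eq by linarith
qed

lemma abs_INF_SUP_diff_le:
  fixes f g :: "'a \<Rightarrow> real" and F :: "'a set set"
  assumes nonempty: "\<forall>B\<in>F. B \<noteq> {}"
    and bounded: "\<forall>B\<in>F. \<forall>x\<in>B. \<bar>g x\<bar> \<le> K"
    and close: "\<forall>B\<in>F. \<forall>x\<in>B. \<bar>f x - g x\<bar> \<le> C" and "0 \<le> C"
  shows "\<bar>(INF B\<in>F. SUP x\<in>B. f x) - (INF B\<in>F. SUP x\<in>B. g x)\<bar> \<le> C"
proof (rule abs_cINF_diff_le)
  have bdd: "bdd_above (g ` B)" if "B \<in> F" for B
    using bounded that by (intro bdd_aboveI[of _ K]) force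
  have "- K \<le> (SUP x\<in>B. g x)" if B: "B \<in> F" for B
  proof -
    obtain x where "x \<in> B" using nonempty B by auto
    then show ?thesis using cSUP_upper[OF _ bdd[OF B]] bounded B by force
  qed
  then show "bdd_below ((\<lambda>B. SUP x\<in>B. g x) ` F)" by (intro bdd_belowI[of _ "- K"]) auto
  show "\<forall>B\<in>F. \<bar>(SUP x\<in>B. f x) - (SUP x\<in>B. g x)\<bar> \<le> C"
    using bdd close \<open>0 \<le> C\<close> by (intro ballI abs_cSUP_diff_le) auto
qed (fact \<open>0 \<le> C\<close>)

lemma kr_genus_empty: "kr_genus {} = 0"
proof -
  have "odd_map_exists {} 0" unfolding odd_map_exists_def by simp
  then have "kr_genus {} \<le> enat 0" unfolding kr_genus_def by (intro INF_lower) simp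
  then show ?thesis by (metis enat_0 le_zero_eq)
qed

lemma genus_family_member_nonempty:
  assumes "1 \<le> k" and "B \<in> genus_family \<mu> p k"
  shows "B \<noteq> {}"
  using assms by (auto simp: genus_family_def kr_genus_empty zero_enat_def)

lemma edge_term_bound:
  fixes f :: "real^'n::finite"
  assumes e: "card e = 2" and s: "\<bar>s\<bar> \<le> 1" and p: "0 \<le> p"
  defines "t \<equiv> SOME t. \<exists>i j. e = {i, j} \<and> i \<noteq> j \<and> t = \<bar>f$i - s * f$j\<bar> powr p"
  shows "0 \<le> t \<and> t \<le> 2 powr p * (\<Sum>l\<in>UNIV. \<bar>f$l\<bar> powr p)"
proof -
  obtain x y where "e = {x, y}" "x \<noteq> y" using e by (auto simp: card_2_iff)
  then have "\<exists>t. \<exists>i j. e = {i, j} \<and> i \<noteq> j \<and> t = \<bar>f$i - s * f$j\<bar> powr p" by blast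
  from someI_ex[OF this] obtain i j where ij: "i \<noteq> j" "t = \<bar>f$i - s * f$j\<bar> powr p"
    unfolding t_def by blast
  define M where "M = max \<bar>f$i\<bar> \<bar>f$j\<bar>"
  have "\<bar>f$i - s * f$j\<bar> \<le> \<bar>f$i\<bar> + \<bar>s\<bar> * \<bar>f$j\<bar>"
    by (metis abs_mult abs_triangle_ineq4)
  also have "\<dots> \<le> 2 * M"
    using s mult_left_le_one_le[of "\<bar>f$j\<bar>" "\<bar>s\<bar>"] unfolding M_def by linarith
  finally have "t \<le> (2 * M) powr p" using p ij by (simp add: powr_mono2)
  also have "\<dots> = 2 powr p * M powr p" unfolding M_def by (simp add: powr_mult)
  also have "M powr p \<le> (\<Sum>l\<in>{i,j}. \<bar>f$l\<bar> powr p)" using ij by (simp add: M_def max_def)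
  also have "\<dots> \<le> (\<Sum>l\<in>UNIV. \<bar>f$l\<bar> powr p)" by (intro sum_mono2) auto
  finally show ?thesis using ij by simp
qed

lemma edge_energy_bounds:
  assumes edges: "\<forall>e\<in>E. card e = 2" and sig: "\<forall>e\<in>E. \<bar>\<sigma> e\<bar> \<le> 1"
    and w: "\<forall>e\<in>E. 0 \<le> w e" and p: "0 \<le> p"
  shows "0 \<le> edge_energy E w \<sigma> p f
    \<and> edge_energy E w \<sigma> p f \<le> 2 powr p * (\<Sum>e\<in>E. w e) * (\<Sum>l\<in>UNIV. \<bar>f$l\<bar> powr p)"
proof -
  let ?t = "\<lambda>e. SOME t. \<exists>i j. e = {i, j} \<and> i \<noteq> j \<and> t = \<bar>f$i - \<sigma> e * f$j\<bar> powr p"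
  let ?S = "\<Sum>l\<in>UNIV. \<bar>f$l\<bar> powr p"
  have terms: "0 \<le> w e * ?t e \<and> w e * ?t e \<le> w e * (2 powr p * ?S)" if "e \<in> E" for e
    using edge_term_bound[of e "\<sigma> e" p f] edges sig w p that by (simp add: mult_left_mono)
  have "edge_energy E w \<sigma> p f \<le> (\<Sum>e\<in>E. w e * (2 powr p * ?S))"
    unfolding edge_energy_def using terms by (intro sum_mono) blast
  moreover have "0 \<le> edge_energy E w \<sigma> p f"
    unfolding edge_energy_def using terms by (intro sum_nonneg) blast
  moreover have "(\<Sum>e\<in>E. w e * (2 powr p * ?S)) = 2 powr p * (\<Sum>e\<in>E. w e) * ?S"
    unfolding sum_distrib_right[symmetric] by (simp only: mult_ac)
  ultimately show ?thesis by linarith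
qed

lemma Min_mu_mult_sum_le_p_norm_mu:
  fixes \<mu> :: "'n::finite \<Rightarrow> real"
  shows "(MIN i\<in>UNIV. \<mu> i) * (\<Sum>l\<in>UNIV. \<bar>f$l\<bar> powr p) \<le> p_norm_mu \<mu> p f"
  unfolding p_norm_mu_def sum_distrib_left by (intro sum_mono mult_right_mono) auto

lemma rayleigh_zero_potential_bounded:
  fixes \<mu> :: "'n::finite \<Rightarrow> real"
  assumes "\<forall>e\<in>E. card e = 2" and "\<forall>e\<in>E. \<bar>\<sigma> e\<bar> \<le> 1" and w: "\<forall>e\<in>E. 0 \<le> w e"
    and mu: "\<forall>i. 0 < \<mu> i" and "0 \<le> p" and f: "f \<in> p_sphere \<mu> p"
  shows "\<bar>rayleigh E w \<sigma> (\<lambda>_. 0) \<mu> p f\<bar> \<le> 2 powr p * (\<Sum>e\<in>E. w e) / (MIN i\<in>UNIV. \<mu> i)"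
proof -
  have m: "0 < (MIN i\<in>UNIV. \<mu> i)" using mu by simp
  have "(\<Sum>l\<in>UNIV. \<bar>f$l\<bar> powr p) \<le> 1 / (MIN i\<in>UNIV. \<mu> i)"
    using Min_mu_mult_sum_le_p_norm_mu[of \<mu> f p] f m by (simp add: p_sphere_def field_simps)
  moreover have "0 \<le> 2 powr p * (\<Sum>e\<in>E. w e)" using w by (simp add: sum_nonneg)
  ultimately have "2 powr p * (\<Sum>e\<in>E. w e) * (\<Sum>l\<in>UNIV. \<bar>f$l\<bar> powr p)
      \<le> 2 powr p * (\<Sum>e\<in>E. w e) / (MIN i\<in>UNIV. \<mu> i)"
    by (metis mult_left_mono times_divide_eq_right mult_1_right)
  then show ?thesis
    using edge_energy_bounds[of E \<sigma> w p f] assms f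
    by (simp add: rayleigh_def p_sphere_def)
qed

lemma abs_potential_le:
  fixes \<mu> \<kappa> :: "'n::finite \<Rightarrow> real"
  assumes mu: "\<forall>i. 0 < \<mu> i"
  shows "\<bar>\<Sum>i\<in>UNIV. \<kappa> i * \<bar>f$i\<bar> powr p\<bar> \<le> (MAX i\<in>UNIV. \<bar>\<kappa> i / \<mu> i\<bar>) * p_norm_mu \<mu> p f"
proof -
  let ?C = "MAX i\<in>UNIV. \<bar>\<kappa> i / \<mu> i\<bar>"
  have "\<bar>\<kappa> i\<bar> \<le> ?C * \<mu> i" for i
  proof -
    have "\<bar>\<kappa> i\<bar> = \<bar>\<kappa> i / \<mu> i\<bar> * \<mu> i" using mu[rule_format, of i] by (simp add: abs_div abs_of_pos)
    also have "\<dots> \<le> ?C * \<mu> i" using mu by (intro mult_right_mono) (auto simp: less_imp_le)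
    finally show ?thesis .
  qed
  then have "\<bar>\<kappa> i * \<bar>f$i\<bar> powr p\<bar> \<le> ?C * (\<mu> i * \<bar>f$i\<bar> powr p)" for i
    by (simp add: abs_mult mult_right_mono mult.assoc[symmetric])
  then have "(\<Sum>i\<in>UNIV. \<bar>\<kappa> i * \<bar>f$i\<bar> powr p\<bar>) \<le> ?C * p_norm_mu \<mu> p f"
    unfolding p_norm_mu_def sum_distrib_left by (intro sum_mono) blast
  then show ?thesis by (rule order_trans[OF sum_abs])
qed

lemma abs_rayleigh_diff_zero_potential_le:
  fixes \<mu> \<kappa> :: "'n::finite \<Rightarrow> real"
  assumes mu: "\<forall>i. 0 < \<mu> i"
  shows "\<bar>rayleigh E w \<sigma> \<kappa> \<mu> p f - rayleigh E w \<sigma> (\<lambda>_. 0) \<mu> p f\<bar>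
    \<le> (MAX i\<in>UNIV. \<bar>\<kappa> i / \<mu> i\<bar>)"
proof -
  let ?C = "MAX i\<in>UNIV. \<bar>\<kappa> i / \<mu> i\<bar>"
  let ?P = "\<Sum>i\<in>UNIV. \<kappa> i * \<bar>f$i\<bar> powr p" and ?N = "p_norm_mu \<mu> p f"
  have diff: "rayleigh E w \<sigma> \<kappa> \<mu> p f - rayleigh E w \<sigma> (\<lambda>_. 0) \<mu> p f = ?P / ?N"
    by (simp add: rayleigh_def add_divide_distrib)
  have "0 \<le> ?N" using mu unfolding p_norm_mu_def by (simp add: sum_nonneg less_imp_le)
  show ?thesis
  proof (cases "?N = 0")
    case True
    then show ?thesis unfolding diff by (simp add: Max_ge_iff)
  next
    case False
    then have "\<bar>?P\<bar> / ?N \<le> ?C"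
      using \<open>0 \<le> ?N\<close> abs_potential_le[OF mu, of \<kappa> f p] by (simp add: divide_le_eq)
    then show ?thesis unfolding diff using \<open>0 \<le> ?N\<close> by (simp add: abs_div)
  qed
qed

theorem proposition4p2:
  fixes E :: "'n::finite set set"
    and \<sigma> w :: "'n set \<Rightarrow> real"
    and \<mu> \<kappa> :: "'n \<Rightarrow> real"
    and p :: real and k :: nat
  assumes edges: "\<forall>e\<in>E. card e = 2"
    and sig: "\<forall>e\<in>E. \<sigma> e = 1 \<or> \<sigma> e = -1"
    and wpos: "\<forall>e\<in>E. w e > 0"
    and mupos: "\<forall>i. \<mu> i > 0"
    and p: "p \<ge> 1"
    and k: "1 \<le> k" "k \<le> CARD('n)"
  shows "var_eigenvalue E w \<sigma> (\<lambda>_. 0) \<mu> p k - (MAX i\<in>UNIV. \<bar>\<kappa> i / \<mu> i\<bar>)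
           \<le> var_eigenvalue E w \<sigma> \<kappa> \<mu> p k
       \<and> var_eigenvalue E w \<sigma> \<kappa> \<mu> p k
           \<le> var_eigenvalue E w \<sigma> (\<lambda>_. 0) \<mu> p k + (MAX i\<in>UNIV. \<bar>\<kappa> i / \<mu> i\<bar>)"
proof -
  let ?C = "MAX i\<in>UNIV. \<bar>\<kappa> i / \<mu> i\<bar>"
  let ?K = "2 powr p * (\<Sum>e\<in>E. w e) / (MIN i\<in>UNIV. \<mu> i)"
  have sig': "\<forall>e\<in>E. \<bar>\<sigma> e\<bar> \<le> 1" and w: "\<forall>e\<in>E. 0 \<le> w e" and "0 \<le> p"
    using sig wpos p by auto
  have "\<bar>var_eigenvalue E w \<sigma> \<kappa> \<mu> p k - var_eigenvalue E w \<sigma> (\<lambda>_. 0) \<mu> p k\<bar> \<le> ?C"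
    unfolding var_eigenvalue_def
  proof (rule abs_INF_SUP_diff_le)
    show "\<forall>B\<in>genus_family \<mu> p k. B \<noteq> {}" using genus_family_member_nonempty[OF k(1)] by blast
    show "\<forall>B\<in>genus_family \<mu> p k. \<forall>f\<in>B. \<bar>rayleigh E w \<sigma> (\<lambda>_. 0) \<mu> p f\<bar> \<le> ?K"
      using rayleigh_zero_potential_bounded[OF edges sig' w mupos \<open>0 \<le> p\<close>]
      by (auto simp: genus_family_def)
    show "\<forall>B\<in>genus_family \<mu> p k. \<forall>f\<in>B.
        \<bar>rayleigh E w \<sigma> \<kappa> \<mu> p f - rayleigh E w \<sigma> (\<lambda>_. 0) \<mu> p f\<bar> \<le> ?C"
      using abs_rayleigh_diff_zero_potential_le[OF mupos] by blast
    show "0 \<le> ?C" by (simp add: Max_ge_iff)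
  qed
  then show ?thesis unfolding abs_le_iff by linarith
qed

end
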